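(* Consider the $n$-agent optimal investment game with exponential (CARA) utilities described in the context. Assume that for every $i\in\{1,\dots,n\}$: $\mu_i>0$, $\nu_i\geq 0$, $\sigma_i\geq 0$, $\nu_i^2+\sigma_i^2>0$, $\delta_i>0$ and $\theta_i\in(0,1)$. Then any constant Nash equilibrium $(\pi_1^*,\dots,\pi_n^* )\in\mathbb{R}^n$ satisfies the coupled system, for all $i\in\{1,\dots,n\}$, $$\mu_i+\frac{1}{\delta_i}\sigma_i\theta_i\widehat{\pi^*\sigma}-\frac{1}{\delta_i}\Big(1-\frac{\theta_i}{n}\Big)(\nu_i^2+\sigma_i^2)\pi_i^*-\lambda_0\beta_i-\lambda_i\alpha_i+\lambda_0\beta_i\, e^{-\frac{1}{\delta_i}\left((1-\frac{\theta_i}{n})\pi_i^*\beta_i-\theta_i\widehat{\pi^*\beta}\right)}+\lambda_i\alpha_i\, e^{-\frac{1}{\delta_i}(1-\frac{\theta_i}{n})\pi_i^*\alpha_i}=0,$$ where $\widehat{\pi^*\sigma}:=\frac1n\sum_{k\neq i}\pi_k^*\sigma_k$ and $\widehat{\pi^*\beta}:=\frac1n\sum_{k\neq i}\pi_k^*\beta_k$. Moreover, if this system has a unique solution, then the constant Nash equilibrium is unique.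
   Context: On a filtered probability space $(\Omega,\mathcal{F},(\mathcal{F}_t)_{t\ge0},\mathbb{P})$ let $B,W^1,\dots,W^n$ be independent standard one-dimensional Brownian motions, and $N^0,N^1,\dots,N^n$ independent Poisson processes (independent of the Brownian motions) with intensities $\lambda_0,\lambda_1,\dots,\lambda_n>0$; let $M^i_t=N^i_t-\lambda_i t$ be the compensated Poisson processes. Fix a horizon $T>0$. There is a riskless bond with zero interest rate, and for each agent $i\in\mathcal{I}=\{1,\dots,n\}$ a stock $S^i$ with $dS^i_t=S^i_{t-}(\mu_i\,dt+\nu_i\,dW^i_t+\sigma_i\,dB_t+\alpha_i\,dM^i_t+\beta_i\,dM^0_t)$, with constants $\mu_i,\nu_i,\sigma_i\in\mathbb{R}$, $\alpha_i,\beta_i\in\mathbb{R}$. Agent $i$ chooses a strategy $\pi^i=(\pi^i_t)_{0\le t\le T}$, the dollar amount invested in $S^i$ (the rest in the bond), self-financing, so her wealth satisfies $dX^i_t=\pi^i_t(\mu_i\,dt+\nu_i\,dW^i_t+\sigma_i\,dB_t+\alpha_i\,dM^i_t+\beta_i\,dM^0_t)$, $X^i_0=x^i_0\in\mathbb{R}$. Her utility is $U_i(x_1,\dots,x_n)=-\exp\!\big(-\frac{1}{\delta_i}(x_i-\theta_i\frac1n\sum_{k=1}^n x_k)\big)$ and her payoff is $J_i(t,x_1,\dots,x_n;\pi^1,\dots,\pi^n)=\mathbb{E}^{t,x_1,\dots,x_n}[U_i(X^1_T,\dots,X^n_T)]$. A tuple $(\pi_1^*,\dots,\pi_n^* )$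 of strategies on $[0,T]$ is a Nash equilibrium if for the initial condition $\vec x=(x^1_0,\dots,x^n_0)$, every agent $i$ and every strategy $\pi_i$, $J_i(0,\vec x;\pi_1^*,\dots,\pi_i^*,\dots,\pi_n^* )\ge J_i(0,\vec x;\pi_1^*,\dots,\pi_{i-1}^*,\pi_i,\pi_{i+1}^*,\dots,\pi_n^* )$. A constant Nash equilibrium is one in which each $\pi_i^*$ is a constant, independent of time and state. *)

theory Defs
  imports "HOL-Probability.Probability"
begin

text \<open>Agents are indexed by 1..n; index 0 of the
  Poisson data refers to the common Poisson process N^0.
  Sources of randomness at the horizon T: B_T, W^i_T (i=1..n), N^k_T (k=0..n).\<close>

datatype src = SB | SW nat | SN nat

definition src_set :: "nat \<Rightarrow> src set" where
  "src_set n = {SB} \<union> SW ` {1..n} \<union> SN ` {0..n}"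

definition src_var :: "('a \<Rightarrow> real) \<Rightarrow> (nat \<Rightarrow> 'a \<Rightarrow> real) \<Rightarrow> (nat \<Rightarrow> 'a \<Rightarrow> real)
    \<Rightarrow> src \<Rightarrow> 'a \<Rightarrow> real" where
  "src_var B W N s = (case s of SB \<Rightarrow> B | SW k \<Rightarrow> W k | SN k \<Rightarrow> N k)"

definition wealth_T ::
  "real \<Rightarrow> (nat \<Rightarrow> real) \<Rightarrow> (nat \<Rightarrow> real) \<Rightarrow> (nat \<Rightarrow> real) \<Rightarrow> (nat \<Rightarrow> real)
   \<Rightarrow> (nat \<Rightarrow> real) \<Rightarrow> (nat \<Rightarrow> real)
   \<Rightarrow> ('a \<Rightarrow> real) \<Rightarrow> (nat \<Rightarrow> 'a \<Rightarrow> real) \<Rightarrow> (nat \<Rightarrow> 'a \<Rightarrow> real)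
   \<Rightarrow> (nat \<Rightarrow> real) \<Rightarrow> (nat \<Rightarrow> real) \<Rightarrow> nat \<Rightarrow> 'a \<Rightarrow> real" where
  "wealth_T T mu nu sg alpha beta lam B W N x st i \<omega> =
     x i + st i * (mu i * T + nu i * W i \<omega> + sg i * B \<omega>
                   + alpha i * (N i \<omega> - lam i * T) + beta i * (N 0 \<omega> - lam 0 * T))"

definition util :: "nat \<Rightarrow> (nat \<Rightarrow> real) \<Rightarrow> (nat \<Rightarrow> real) \<Rightarrow> nat \<Rightarrow> (nat \<Rightarrow> real) \<Rightarrow> real" where
  "util n delta theta i xs =
     - exp (- (1 / delta i) * (xs i - theta i * (1 / real n) * (\<Sum>k=1..n. xs k)))"

definition payoff where
  "payoff M n T mu nu sg alpha beta lam delta theta B W N x st i =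
     integral\<^sup>L M (\<lambda>\<omega>. util n delta theta i
        (\<lambda>k. wealth_T T mu nu sg alpha beta lam B W N x st k \<omega>))"

definition const_NE where
  "const_NE M n T mu nu sg alpha beta lam delta theta B W N x st \<longleftrightarrow>
     (\<forall>i\<in>{1..n}. \<forall>p::real.
        payoff M n T mu nu sg alpha beta lam delta theta B W N x st i \<ge>
        payoff M n T mu nu sg alpha beta lam delta theta B W N x (st(i := p)) i)"

definition NE_system ::
  "nat \<Rightarrow> (nat \<Rightarrow> real) \<Rightarrow> (nat \<Rightarrow> real) \<Rightarrow> (nat \<Rightarrow> real) \<Rightarrow> (nat \<Rightarrow> real) \<Rightarrow> (nat \<Rightarrow> real)
   \<Rightarrow> (nat \<Rightarrow> real) \<Rightarrow> (nat \<Rightarrow> real) \<Rightarrow> (nat \<Rightarrow> real) \<Rightarrow> (nat \<Rightarrow> real) \<Rightarrow> bool" where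
  "NE_system n mu nu sg alpha beta lam delta theta st \<longleftrightarrow>
     (\<forall>i\<in>{1..n}.
       let sig_hat = (1 / real n) * (\<Sum>k\<in>{1..n} - {i}. st k * sg k);
           bet_hat = (1 / real n) * (\<Sum>k\<in>{1..n} - {i}. st k * beta k);
           c = 1 - theta i / real n
       in mu i + (1 / delta i) * sg i * theta i * sig_hat
          - (1 / delta i) * c * ((nu i)\<^sup>2 + (sg i)\<^sup>2) * st i
          - lam 0 * beta i - lam i * alpha i
          + lam 0 * beta i * exp (- (1 / delta i) * (c * st i * beta i - theta i * bet_hat))
          + lam i * alpha i * exp (- (1 / delta i) * c * st i * alpha i) = 0)"

end

theory Submission
  imports Defs
begin

text \<open>For constant strategies every terminal wealth, and hence the exponent of agent i's
  utility, is an affine function of the independent terminal values B_T, W^k_T and N^k_T.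
  The payoff therefore factorises into Gaussian and Poisson moment generating functions and
  equals -exp (G_i \<pi>) for an explicit smooth G_i. In a Nash equilibrium \<pi>_i minimises
  p \<mapsto> G_i (\<pi> with \<pi>_i := p); the derivative of this function is the left-hand side of the
  i-th equation of the system times the nonzero factor -T (1 - \<theta>_i/n) / \<delta>_i, so it
  vanishes exactly when that equation holds. Uniqueness of equilibria is then inherited
  from uniqueness of solutions of the system.\<close>

lemma
  fixes r c :: real
  assumes "r > 0"
  shows integrable_poisson_pmf_exp: "integrable (measure_pmf (poisson_pmf r)) (\<lambda>k. exp (c * real k))"
    and integral_poisson_pmf_exp:
      "(\<integral>k. exp (c * real k) \<partial>measure_pmf (poisson_pmf r)) = exp (r * (exp c - 1))"
proof -
  have terms: "pmf (poisson_pmf r) k *\<^sub>R exp (c * real k) = exp (-r) * ((r * exp c) ^ k /\<^sub>R fact k)"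
    for k
    using assms by (simp add: power_mult_distrib exp_of_nat_mult[symmetric] field_simps mult.commute)
  have sums: "(\<lambda>k. pmf (poisson_pmf r) k *\<^sub>R exp (c * real k)) sums (exp (-r) * exp (r * exp c))"
    unfolding terms by (intro sums_mult exp_converges)
  have int: "integrable (count_space UNIV) (\<lambda>k. pmf (poisson_pmf r) k *\<^sub>R exp (c * real k))"
    using sums assms by (subst integrable_count_space_nat_iff) (auto simp: sums_summable)
  then show "integrable (measure_pmf (poisson_pmf r)) (\<lambda>k. exp (c * real k))"
    by (simp add: measure_pmf_eq_density integrable_density)
  have "(\<integral>k. exp (c * real k) \<partial>measure_pmf (poisson_pmf r)) =
      (\<integral>k. pmf (poisson_pmf r) k *\<^sub>R exp (c * real k) \<partial>count_space UNIV)"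
    by (simp add: measure_pmf_eq_density integral_density)
  also have "\<dots> = exp (-r) * exp (r * exp c)"
    using sums_integral_count_space_nat[OF int] sums sums_unique2 by blast
  also have "\<dots> = exp (r * (exp c - 1))"
    by (simp add: exp_add[symmetric] algebra_simps)
  finally show "(\<integral>k. exp (c * real k) \<partial>measure_pmf (poisson_pmf r)) = exp (r * (exp c - 1))" .
qed

lemma
  fixes r c :: real and X :: "'a \<Rightarrow> real"
  assumes "r > 0" and X: "X \<in> borel_measurable M"
    and law: "distr M borel X = distr (measure_pmf (poisson_pmf r)) borel real"
  shows integrable_exp_poisson: "integrable M (\<lambda>\<omega>. exp (c * X \<omega>))"
    and integral_exp_poisson: "(\<integral>\<omega>. exp (c * X \<omega>) \<partial>M) = exp (r * (exp c - 1))"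
proof -
  have "integrable (distr M borel X) (\<lambda>y. exp (c * y))"
    unfolding law using integrable_poisson_pmf_exp[OF \<open>r > 0\<close>, of c]
    by (subst integrable_distr_eq) auto
  then show "integrable M (\<lambda>\<omega>. exp (c * X \<omega>))"
    using X by (subst (asm) integrable_distr_eq) auto
  have "(\<integral>\<omega>. exp (c * X \<omega>) \<partial>M) = (\<integral>y. exp (c * y) \<partial>distr M borel X)"
    using X by (subst integral_distr) auto
  also have "\<dots> = exp (r * (exp c - 1))"
    unfolding law using integral_poisson_pmf_exp[OF \<open>r > 0\<close>, of c]
    by (subst integral_distr) auto
  finally show "(\<integral>\<omega>. exp (c * X \<omega>) \<partial>M) = exp (r * (exp c - 1))" .
qed

lemma
  fixes s c :: real
  assumes "s > 0"
  shows integrable_normal_density_exp: "integrable lborel (\<lambda>y. normal_density 0 s y * exp (c * y))"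
    and integral_normal_density_exp:
      "(\<integral>y. normal_density 0 s y * exp (c * y) \<partial>lborel) = exp (c\<^sup>2 * s\<^sup>2 / 2)"
proof -
  have tilt: "normal_density 0 s y * exp (c * y) = exp (c\<^sup>2 * s\<^sup>2 / 2) * normal_density (c * s\<^sup>2) s y"
    for y
    unfolding normal_density_def using assms
    by (simp add: exp_add[symmetric] field_simps power2_eq_square)
  show "integrable lborel (\<lambda>y. normal_density 0 s y * exp (c * y))"
    unfolding tilt using assms by simp
  show "(\<integral>y. normal_density 0 s y * exp (c * y) \<partial>lborel) = exp (c\<^sup>2 * s\<^sup>2 / 2)"
    unfolding tilt using assms by simp
qed

lemma
  fixes T c :: real and X :: "'a \<Rightarrow> real"
  assumes "T > 0" and law: "distributed M lborel X (normal_density 0 (sqrt T))"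
  shows integrable_exp_normal: "integrable M (\<lambda>\<omega>. exp (c * X \<omega>))"
    and integral_exp_normal: "(\<integral>\<omega>. exp (c * X \<omega>) \<partial>M) = exp (c\<^sup>2 * T / 2)"
proof -
  have "sqrt T > 0" using \<open>T > 0\<close> by simp
  then show "integrable M (\<lambda>\<omega>. exp (c * X \<omega>))"
    using distributed_integrable[OF law, of "\<lambda>y. exp (c * y)"]
      integrable_normal_density_exp[of "sqrt T" c]
    by simp
  show "(\<integral>\<omega>. exp (c * X \<omega>) \<partial>M) = exp (c\<^sup>2 * T / 2)"
    using distributed_integral[OF law, of "\<lambda>y. exp (c * y)"]
      integral_normal_density_exp[OF \<open>sqrt T > 0\<close>, of c] \<open>T > 0\<close>
    by simp
qed

lemma (in prob_space) expectation_exp_sum_indep: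
  fixes X :: "'i \<Rightarrow> 'a \<Rightarrow> real" and c L :: "'i \<Rightarrow> real"
  assumes "finite S" and indep: "indep_vars (\<lambda>_. borel) X S"
    and integrable: "\<And>s. s \<in> S \<Longrightarrow> integrable M (\<lambda>\<omega>. exp (c s * X s \<omega>))"
    and mgf: "\<And>s. s \<in> S \<Longrightarrow> expectation (\<lambda>\<omega>. exp (c s * X s \<omega>)) = exp (L s)"
  shows "expectation (\<lambda>\<omega>. exp (K + (\<Sum>s\<in>S. c s * X s \<omega>))) = exp (K + (\<Sum>s\<in>S. L s))"
proof -
  have "indep_vars (\<lambda>_. borel) (\<lambda>s \<omega>. exp (c s * X s \<omega>)) S"
    by (rule indep_vars_compose2[OF indep]) measurable
  then have "expectation (\<lambda>\<omega>. \<Prod>s\<in>S. exp (c s * X s \<omega>)) = (\<Prod>s\<in>S. exp (L s))"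
    using \<open>finite S\<close> integrable by (simp add: indep_vars_lebesgue_integral mgf)
  then show ?thesis
    using \<open>finite S\<close> by (simp add: exp_add exp_sum)
qed

lemma sum_fun_upd:
  assumes "finite A" "i \<in> A"
  shows "(\<Sum>k\<in>A. f k ((q(i := p)) k)) = f i p + (\<Sum>k\<in>A - {i}. f k (q k))"
proof -
  have "(\<Sum>k\<in>A - {i}. f k ((q(i := p)) k)) = (\<Sum>k\<in>A - {i}. f k (q k))"
    by (rule sum.cong) auto
  then show ?thesis
    using assms by (simp add: sum.remove)
qed

lemma finite_src_set: "finite (src_set n)"
  by (simp add: src_set_def)

lemma sum_src_set:
  "(\<Sum>s\<in>src_set n. f s) = f SB + (\<Sum>k=1..n. f (SW k)) + f (SN 0) + (\<Sum>k=1..n. f (SN k))"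
proof -
  have "(\<Sum>s\<in>src_set n. f s) = f SB + (\<Sum>s\<in>SW ` {1..n}. f s) + (\<Sum>s\<in>SN ` {0..n}. f s)"
    unfolding src_set_def by (subst sum.union_disjoint, auto)+ (subst sum.insert, auto)
  also have "(\<Sum>s\<in>SW ` {1..n}. f s) = (\<Sum>k=1..n. f (SW k))"
    by (subst sum.reindex) (auto simp: inj_on_def)
  also have "(\<Sum>s\<in>SN ` {0..n}. f s) = f (SN 0) + (\<Sum>k=1..n. f (SN k))"
    by (subst sum.reindex) (auto simp: inj_on_def sum.atLeast_Suc_atMost)
  finally show ?thesis by (simp add: add.assoc)
qed

locale cara_investment_game = prob_space M
  for M :: "'a measure" and n :: nat and T :: real
    and mu nu sg alpha beta lam delta theta x :: "nat \<Rightarrow> real"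
    and B :: "'a \<Rightarrow> real" and W N :: "nat \<Rightarrow> 'a \<Rightarrow> real" +
  assumes T_pos: "T > 0"
    and lam_pos: "\<And>k. k \<in> {0..n} \<Longrightarrow> lam k > 0"
    and B_law: "distributed M lborel B (normal_density 0 (sqrt T))"
    and W_law: "\<And>k. k \<in> {1..n} \<Longrightarrow> distributed M lborel (W k) (normal_density 0 (sqrt T))"
    and N_law: "\<And>k. k \<in> {0..n} \<Longrightarrow>
      distr M borel (N k) = distr (measure_pmf (poisson_pmf (lam k * T))) borel real"
    and indep: "indep_vars (\<lambda>_. borel) (src_var B W N) (src_set n)"
begin

definition weight :: "nat \<Rightarrow> nat \<Rightarrow> real" where
  "weight i k = - (1 / delta i) * ((if k = i then 1 else 0) - theta i / real n)"

definition drift :: "nat \<Rightarrow> real" where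
  "drift k = (mu k - alpha k * lam k - beta k * lam 0) * T"

definition src_coeff :: "(nat \<Rightarrow> real) \<Rightarrow> (nat \<Rightarrow> real) \<Rightarrow> src \<Rightarrow> real" where
  "src_coeff w q s = (case s of
      SB \<Rightarrow> \<Sum>k=1..n. w k * q k * sg k
    | SW k \<Rightarrow> w k * q k * nu k
    | SN k \<Rightarrow> if k = 0 then \<Sum>j=1..n. w j * q j * beta j else w k * q k * alpha k)"

definition src_cumulant :: "src \<Rightarrow> real \<Rightarrow> real" where
  "src_cumulant s c = (case s of SN k \<Rightarrow> lam k * T * (exp c - 1) | _ \<Rightarrow> c\<^sup>2 * T / 2)"

definition payoff_exponent :: "(nat \<Rightarrow> real) \<Rightarrow> nat \<Rightarrow> real" where
  "payoff_exponent q i =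
     (\<Sum>k=1..n. weight i k * (x k + q k * drift k))
     + (\<Sum>k=1..n. weight i k * q k * sg k)\<^sup>2 * T / 2
     + (\<Sum>k=1..n. (weight i k * q k * nu k)\<^sup>2 * T / 2)
     + lam 0 * T * (exp (\<Sum>k=1..n. weight i k * q k * beta k) - 1)
     + (\<Sum>k=1..n. lam k * T * (exp (weight i k * q k * alpha k) - 1))"

lemma util_eq_exp_weighted_sum:
  assumes "i \<in> {1..n}"
  shows "util n delta theta i xs = - exp (\<Sum>k=1..n. weight i k * xs k)"
proof -
  have "(\<Sum>k=1..n. weight i k * xs k)
      = (\<Sum>k=1..n. - (1 / delta i) * (if k = i then xs k else 0) + 1 / delta i * (theta i / real n) * xs k)"
    by (rule sum.cong) (simp_all add: weight_def algebra_simps)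
  also have "\<dots> = - (1 / delta i) * (\<Sum>k=1..n. if k = i then xs k else 0)
      + 1 / delta i * (theta i / real n) * (\<Sum>k=1..n. xs k)"
    by (simp only: sum.distrib sum_distrib_left)
  also have "(\<Sum>k=1..n. if k = i then xs k else 0) = xs i"
    using assms by simp
  finally show ?thesis
    by (simp add: util_def algebra_simps)
qed

lemma weighted_wealth_eq:
  "(\<Sum>k=1..n. w k * wealth_T T mu nu sg alpha beta lam B W N x q k \<omega>)
   = (\<Sum>k=1..n. w k * (x k + q k * drift k))
     + (\<Sum>s\<in>src_set n. src_coeff w q s * src_var B W N s \<omega>)"
proof -
  have "w k * wealth_T T mu nu sg alpha beta lam B W N x q k \<omega>
      = w k * (x k + q k * drift k) + (w k * q k * sg k) * B \<omega> + (w k * q k * nu k) * W k \<omega>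
        + (w k * q k * beta k) * N 0 \<omega> + (w k * q k * alpha k) * N k \<omega>" for k
    by (simp add: wealth_T_def drift_def algebra_simps)
  then show ?thesis
    unfolding sum_src_set
    by (simp add: sum.distrib sum_distrib_right src_coeff_def src_var_def add.assoc)
qed

lemma
  assumes "s \<in> src_set n"
  shows integrable_exp_src_var: "integrable M (\<lambda>\<omega>. exp (c * src_var B W N s \<omega>))"
    and expectation_exp_src_var:
      "expectation (\<lambda>\<omega>. exp (c * src_var B W N s \<omega>)) = exp (src_cumulant s c)"
proof -
  have "integrable M (\<lambda>\<omega>. exp (c * src_var B W N s \<omega>))
      \<and> expectation (\<lambda>\<omega>. exp (c * src_var B W N s \<omega>)) = exp (src_cumulant s c)"
  proof (cases s)
    case SB
    then show ?thesis
      using integrable_exp_normal[OF T_pos B_law] integral_exp_normal[OF T_pos B_law]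
      by (simp add: src_var_def src_cumulant_def)
  next
    case (SW k)
    then have law: "distributed M lborel (W k) (normal_density 0 (sqrt T))"
      using assms W_law by (auto simp: src_set_def)
    show ?thesis
      using integrable_exp_normal[OF T_pos law] integral_exp_normal[OF T_pos law] SW
      by (simp add: src_var_def src_cumulant_def)
  next
    case (SN k)
    then have k: "k \<in> {0..n}"
      using assms by (auto simp: src_set_def)
    have rate: "lam k * T > 0"
      using lam_pos[OF k] T_pos by simp
    have meas: "N k \<in> borel_measurable M"
      using indep assms SN unfolding indep_vars_def by (auto simp: src_var_def)
    show ?thesis
      using integrable_exp_poisson[OF rate meas N_law[OF k]]
        integral_exp_poisson[OF rate meas N_law[OF k]] SN
      by (simp add: src_var_def src_cumulant_def)
  qed
  then show "integrable M (\<lambda>\<omega>. exp (c * src_var B W N s \<omega>))"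
    and "expectation (\<lambda>\<omega>. exp (c * src_var B W N s \<omega>)) = exp (src_cumulant s c)"
    by auto
qed

lemma payoff_eq_exp:
  assumes "i \<in> {1..n}"
  shows "payoff M n T mu nu sg alpha beta lam delta theta B W N x q i = - exp (payoff_exponent q i)"
proof -
  let ?K = "\<Sum>k=1..n. weight i k * (x k + q k * drift k)"
  have "payoff M n T mu nu sg alpha beta lam delta theta B W N x q i
      = - expectation (\<lambda>\<omega>. exp (?K + (\<Sum>s\<in>src_set n. src_coeff (weight i) q s * src_var B W N s \<omega>)))"
    unfolding payoff_def util_eq_exp_weighted_sum[OF assms] weighted_wealth_eq by simp
  also have "\<dots> = - exp (?K + (\<Sum>s\<in>src_set n. src_cumulant s (src_coeff (weight i) q s)))"
    using finite_src_set indep integrable_exp_src_var expectation_exp_src_var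
    by (simp add: expectation_exp_sum_indep)
  also have "\<dots> = - exp (payoff_exponent q i)"
    unfolding sum_src_set payoff_exponent_def
    by (simp add: src_cumulant_def src_coeff_def)
  finally show ?thesis .
qed

definition foc_residual :: "(nat \<Rightarrow> real) \<Rightarrow> nat \<Rightarrow> real" where
  "foc_residual st i =
     (let sig_hat = (1 / real n) * (\<Sum>k\<in>{1..n} - {i}. st k * sg k);
          bet_hat = (1 / real n) * (\<Sum>k\<in>{1..n} - {i}. st k * beta k);
          c = 1 - theta i / real n
      in mu i + (1 / delta i) * sg i * theta i * sig_hat
         - (1 / delta i) * c * ((nu i)\<^sup>2 + (sg i)\<^sup>2) * st i
         - lam 0 * beta i - lam i * alpha i
         + lam 0 * beta i * exp (- (1 / delta i) * (c * st i * beta i - theta i * bet_hat))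
         + lam i * alpha i * exp (- (1 / delta i) * c * st i * alpha i))"

lemma NE_system_iff_foc_residual:
  "NE_system n mu nu sg alpha beta lam delta theta st \<longleftrightarrow> (\<forall>i\<in>{1..n}. foc_residual st i = 0)"
  by (simp add: NE_system_def foc_residual_def Let_def)

lemma payoff_exponent_fun_upd:
  assumes "i \<in> {1..n}"
  obtains C where "\<And>p. payoff_exponent (q(i := p)) i = C + weight i i * p * drift i
      + (weight i i * p * sg i + (\<Sum>k\<in>{1..n} - {i}. weight i k * q k * sg k))\<^sup>2 * T / 2
      + (weight i i * p * nu i)\<^sup>2 * T / 2
      + lam 0 * T * exp (weight i i * p * beta i + (\<Sum>k\<in>{1..n} - {i}. weight i k * q k * beta k))
      + lam i * T * exp (weight i i * p * alpha i)"
proof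
  have i: "finite {1..n}" "i \<in> {1..n}"
    using assms by auto
  fix p
  show "payoff_exponent (q(i := p)) i = (\<Sum>k\<in>{1..n} - {i}. weight i k * (x k + q k * drift k))
      + weight i i * x i + (\<Sum>k\<in>{1..n} - {i}. (weight i k * q k * nu k)\<^sup>2 * T / 2)
      + (\<Sum>k\<in>{1..n} - {i}. lam k * T * (exp (weight i k * q k * alpha k) - 1)) - lam 0 * T - lam i * T
      + weight i i * p * drift i
      + (weight i i * p * sg i + (\<Sum>k\<in>{1..n} - {i}. weight i k * q k * sg k))\<^sup>2 * T / 2
      + (weight i i * p * nu i)\<^sup>2 * T / 2
      + lam 0 * T * exp (weight i i * p * beta i + (\<Sum>k\<in>{1..n} - {i}. weight i k * q k * beta k))
      + lam i * T * exp (weight i i * p * alpha i)"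
    unfolding payoff_exponent_def
    using sum_fun_upd[OF i, of "\<lambda>k v. weight i k * (x k + v * drift k)" q p]
      sum_fun_upd[OF i, of "\<lambda>k v. weight i k * v * sg k" q p]
      sum_fun_upd[OF i, of "\<lambda>k v. (weight i k * v * nu k)\<^sup>2 * T / 2" q p]
      sum_fun_upd[OF i, of "\<lambda>k v. weight i k * v * beta k" q p]
      sum_fun_upd[OF i, of "\<lambda>k v. lam k * T * (exp (weight i k * v * alpha k) - 1)" q p]
    by (simp add: algebra_simps)
qed

lemma has_real_derivative_payoff_exponent:
  assumes "i \<in> {1..n}"
  shows "((\<lambda>p. payoff_exponent (q(i := p)) i)
          has_real_derivative T * weight i i * foc_residual (q(i := p)) i) (at p)"
proof -
  define c where "c = 1 - theta i / real n"
  define sig_hat where "sig_hat = (1 / real n) * (\<Sum>k\<in>{1..n} - {i}. q k * sg k)"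
  define bet_hat where "bet_hat = (1 / real n) * (\<Sum>k\<in>{1..n} - {i}. q k * beta k)"
  have w_ii: "weight i i = - (1 / delta i) * c"
    by (simp add: weight_def c_def)
  have w_ik: "weight i k = theta i / delta i * (1 / real n)" if "k \<noteq> i" for k
    using that by (simp add: weight_def)
  have S_sg: "(\<Sum>k\<in>{1..n} - {i}. weight i k * q k * sg k) = theta i / delta i * sig_hat"
    unfolding sig_hat_def sum_distrib_left by (rule sum.cong) (auto simp: w_ik)
  have S_beta: "(\<Sum>k\<in>{1..n} - {i}. weight i k * q k * beta k) = theta i / delta i * bet_hat"
    unfolding bet_hat_def sum_distrib_left by (rule sum.cong) (auto simp: w_ik)
  have hats: "(\<Sum>k\<in>{1..n} - {i}. (q(i := p)) k * f k) = (\<Sum>k\<in>{1..n} - {i}. q k * f k)" for f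
    by (rule sum.cong) auto
  obtain C where E: "\<And>p. payoff_exponent (q(i := p)) i = C + weight i i * p * drift i
      + (weight i i * p * sg i + (\<Sum>k\<in>{1..n} - {i}. weight i k * q k * sg k))\<^sup>2 * T / 2
      + (weight i i * p * nu i)\<^sup>2 * T / 2
      + lam 0 * T * exp (weight i i * p * beta i + (\<Sum>k\<in>{1..n} - {i}. weight i k * q k * beta k))
      + lam i * T * exp (weight i i * p * alpha i)"
    using payoff_exponent_fun_upd[OF assms] by blast
  define E1 where "E1 = exp (- (1 / delta i) * (c * p * beta i - theta i * bet_hat))"
  define E2 where "E2 = exp (- (1 / delta i) * c * p * alpha i)"
  have E1_eq: "exp (weight i i * p * beta i + theta i / delta i * bet_hat) = E1"
    by (simp add: E1_def w_ii algebra_simps)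
  have E2_eq: "exp (weight i i * p * alpha i) = E2"
    by (simp add: E2_def w_ii algebra_simps)
  have "((\<lambda>p. payoff_exponent (q(i := p)) i) has_real_derivative
      weight i i * drift i
      + T * (weight i i * p * sg i + theta i / delta i * sig_hat) * (weight i i * sg i)
      + T * (weight i i * p * nu i) * (weight i i * nu i)
      + lam 0 * T * E1 * (weight i i * beta i)
      + lam i * T * E2 * (weight i i * alpha i)) (at p)"
    unfolding E S_sg S_beta E1_eq[symmetric] E2_eq[symmetric]
    by (rule derivative_eq_intros refl | simp)+
  moreover have "weight i i * drift i
      + T * (weight i i * p * sg i + theta i / delta i * sig_hat) * (weight i i * sg i)
      + T * (weight i i * p * nu i) * (weight i i * nu i)
      + lam 0 * T * E1 * (weight i i * beta i)
      + lam i * T * E2 * (weight i i * alpha i)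
      = T * weight i i * (mu i + (1 / delta i) * sg i * theta i * sig_hat
      - (1 / delta i) * c * ((nu i)\<^sup>2 + (sg i)\<^sup>2) * p
      - lam 0 * beta i - lam i * alpha i + lam 0 * beta i * E1 + lam i * alpha i * E2)"
    by (simp add: drift_def w_ii algebra_simps power2_eq_square)
  moreover have "foc_residual (q(i := p)) i = mu i + (1 / delta i) * sg i * theta i * sig_hat
      - (1 / delta i) * c * ((nu i)\<^sup>2 + (sg i)\<^sup>2) * p
      - lam 0 * beta i - lam i * alpha i + lam 0 * beta i * E1 + lam i * alpha i * E2"
    unfolding foc_residual_def Let_def hats
    by (simp add: E1_def E2_def c_def sig_hat_def bet_hat_def)
  ultimately show ?thesis
    by (metis DERIV_cong)
qed

lemma foc_residual_eq_0_at_minimum: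
  assumes "i \<in> {1..n}" and "delta i \<noteq> 0" and "theta i \<noteq> real n"
    and min: "\<And>p. payoff_exponent q i \<le> payoff_exponent (q(i := p)) i"
  shows "foc_residual q i = 0"
proof -
  have "T * weight i i * foc_residual q i = 0"
    using has_real_derivative_payoff_exponent[OF assms(1), of q "q i"] min
    by (intro DERIV_local_min[where d = 1]) auto
  moreover have "weight i i \<noteq> 0"
    using assms(1-3) by (auto simp: weight_def field_simps)
  ultimately show ?thesis
    using T_pos by simp
qed

end

theorem theorem2p1:
  fixes M :: "'a measure"
    and n :: nat and T :: real
    and mu nu sg alpha beta lam delta theta x :: "nat \<Rightarrow> real"
    and B :: "'a \<Rightarrow> real" and W N :: "nat \<Rightarrow> 'a \<Rightarrow> real"
  assumes "prob_space M"
    and "n \<ge> 1" and "T > 0"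
    and lam_pos: "\<forall>k\<in>{0..n}. lam k > 0"
    and B_law: "distributed M lborel B (normal_density 0 (sqrt T))"
    and W_law: "\<forall>k\<in>{1..n}. distributed M lborel (W k) (normal_density 0 (sqrt T))"
    and N_law: "\<forall>k\<in>{0..n}. distr M borel (N k)
                   = distr (measure_pmf (poisson_pmf (lam k * T))) borel real"
    and indep: "prob_space.indep_vars M (\<lambda>_. borel) (src_var B W N) (src_set n)"
    and params: "\<forall>i\<in>{1..n}. mu i > 0 \<and> nu i \<ge> 0 \<and> sg i \<ge> 0
                   \<and> (nu i)\<^sup>2 + (sg i)\<^sup>2 > 0 \<and> delta i > 0 \<and> 0 < theta i \<and> theta i < 1"
  shows "(\<forall>st. const_NE M n T mu nu sg alpha beta lam delta theta B W N x st
                 \<longrightarrow> NE_system n mu nu sg alpha beta lam delta theta st)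
       \<and> ((\<forall>p q. NE_system n mu nu sg alpha beta lam delta theta p
                 \<and> NE_system n mu nu sg alpha beta lam delta theta q
                 \<longrightarrow> (\<forall>i\<in>{1..n}. p i = q i))
          \<longrightarrow> (\<forall>st st'. const_NE M n T mu nu sg alpha beta lam delta theta B W N x st
                 \<and> const_NE M n T mu nu sg alpha beta lam delta theta B W N x st'
                 \<longrightarrow> (\<forall>i\<in>{1..n}. st i = st' i)))"
proof -
  interpret cara_investment_game M n T mu nu sg alpha beta lam delta theta x B W N
    using assms unfolding cara_investment_game_def cara_investment_game_axioms_def by auto
  have "NE_system n mu nu sg alpha beta lam delta theta st"
    if NE: "const_NE M n T mu nu sg alpha beta lam delta theta B W N x st" for st
    unfolding NE_system_iff_foc_residual
  proof
    fix i assume i: "i \<in> {1..n}"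
    have min: "\<And>p. payoff_exponent st i \<le> payoff_exponent (st(i := p)) i"
      using NE i by (simp add: const_NE_def payoff_eq_exp)
    have "delta i > 0" "theta i < 1"
      using params i by auto
    then show "foc_residual st i = 0"
      using \<open>n \<ge> 1\<close> by (intro foc_residual_eq_0_at_minimum[OF i _ _ min]) auto
  qed
  then show ?thesis
    by blast
qed

end
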